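(* Let $\mathbb{X}=\{T,F\}$, $n\ge1$, and for $i=1,\dots,n$ let $Bel_{\mathbb{X}_i}$ be a belief function on $\mathbb{X}_i=\mathbb{X}$. Define the belief likelihood $Bel_{\mathbb{X}_1\times\cdots\times\mathbb{X}_n}$ as the combination $Bel_{\mathbb{X}_1}^{\uparrow}\odot\cdots\odot Bel_{\mathbb{X}_n}^{\uparrow}$ of the vacuous extensions to $\mathbb{X}_1\times\cdots\times\mathbb{X}_n$, where $\odot$ is either Dempster's rule $\oplus$ or the conjunctive rule. Then for every tuple $(x_1,\dots,x_n)$ with $x_i\in\mathbb{X}_i$, \[ Bel_{\mathbb{X}_1\times\cdots\times\mathbb{X}_n}(\{(x_1,\dots,x_n)\})=\prod_{i=1}^n Bel_{\mathbb{X}_i}(\{x_i\}). \]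
   Context: A mass function on a finite set $\Theta$ is $m:2^\Theta\to[0,1]$ with $\sum_A m(A)=1$ (for Dempster's rule also $m(\emptyset)=0$); belief function $Bel(A)=\sum_{B\subseteq A}m(B)$ (for unnormalised masses the sum is over non-empty $B\subseteq A$). With $m_\cap(A)=\sum_{B\cap C=A}m_1(B)m_2(C)$, Dempster's rule gives $m_\oplus(A)=m_\cap(A)/(1-m_\cap(\emptyset))$ for $A\neq\emptyset$, and the conjunctive rule gives $m(A)=m_\cap(A)$ for all $A$ including $\emptyset$. The vacuous extension of a belief function on $\mathbb{X}_i$ with mass $m_i$ to $\mathbb{X}_1\times\cdots\times\mathbb{X}_n$ assigns mass $m_i(B)$ to $\mathbb{X}_1\times\cdots\times\mathbb{X}_{i-1}\times B\times\mathbb{X}_{i+1}\times\cdots\times\mathbb{X}_n$ and $0$ elsewhere. (In the paper each $Bel_{\mathbb{X}_i}$ depends on a parameter $\theta$, which is held fixed.) *)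

theory Defs
  imports Complex_Main
begin

text \<open>Mass function on a finite frame Theta (possibly unnormalised: m {} may be > 0).\<close>
definition mass_fun :: "'a set \<Rightarrow> ('a set \<Rightarrow> real) \<Rightarrow> bool" where
  "mass_fun Theta m \<longleftrightarrow> (\<forall>A. 0 \<le> m A) \<and> (\<forall>A. \<not> A \<subseteq> Theta \<longrightarrow> m A = 0)
     \<and> sum m (Pow Theta) = 1"

text \<open>Belief function: sum over non-empty focal subsets (coincides with the usual
  definition when m {} = 0).\<close>
definition bel :: "('a set \<Rightarrow> real) \<Rightarrow> 'a set \<Rightarrow> real" where
  "bel m A = sum m {B. B \<subseteq> A \<and> B \<noteq> {}}"

definition conj_rule :: "'a set \<Rightarrow> ('a set \<Rightarrow> real) \<Rightarrow> ('a set \<Rightarrow> real) \<Rightarrow> 'a set \<Rightarrow> real" where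
  "conj_rule Theta m1 m2 A =
     (\<Sum>(B, C) \<in> {(B, C). B \<subseteq> Theta \<and> C \<subseteq> Theta \<and> B \<inter> C = A}. m1 B * m2 C)"

definition dempster_rule :: "'a set \<Rightarrow> ('a set \<Rightarrow> real) \<Rightarrow> ('a set \<Rightarrow> real) \<Rightarrow> 'a set \<Rightarrow> real" where
  "dempster_rule Theta m1 m2 A =
     (if A = {} then 0 else conj_rule Theta m1 m2 A / (1 - conj_rule Theta m1 m2 {}))"

fun combine_list :: "(('a set \<Rightarrow> real) \<Rightarrow> ('a set \<Rightarrow> real) \<Rightarrow> ('a set \<Rightarrow> real))
      \<Rightarrow> ('a set \<Rightarrow> real) list \<Rightarrow> ('a set \<Rightarrow> real)" where
  "combine_list r [] = (\<lambda>A. 0)"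
| "combine_list r [m] = m"
| "combine_list r (m1 # m2 # ms) = combine_list r (r m1 m2 # ms)"

text \<open>Product frame X_1 x ... x X_n with X_i = {T,F} = bool; tuples are lists of length n
  (component i is xs ! i, i < n).\<close>
definition prod_frame :: "nat \<Rightarrow> bool list set" where
  "prod_frame n = {xs. length xs = n}"

definition cyl :: "nat \<Rightarrow> nat \<Rightarrow> bool set \<Rightarrow> bool list set" where
  "cyl n i B = {xs. length xs = n \<and> xs ! i \<in> B}"

definition vac_ext :: "nat \<Rightarrow> nat \<Rightarrow> (bool set \<Rightarrow> real) \<Rightarrow> bool list set \<Rightarrow> real" where
  "vac_ext n i m A = sum m {B. cyl n i B = A}"


definition bel_lik :: "((bool list set \<Rightarrow> real) \<Rightarrow> (bool list set \<Rightarrow> real) \<Rightarrow> (bool list set \<Rightarrow> real))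
      \<Rightarrow> nat \<Rightarrow> (nat \<Rightarrow> bool set \<Rightarrow> real) \<Rightarrow> bool list set \<Rightarrow> real" where
  "bel_lik r n ms = combine_list r (map (\<lambda>i. vac_ext n i (ms i)) [0..<n])"

end

theory Submission imports Defs begin

text \<open>Every focal set of the conjunctive combination of the first k vacuous extensions is a
  rectangle B_0 x ... x B_(k-1) x X^(n-k) whose sides are focal for the factor masses. A
  rectangle determines its sides when it is a singleton, so at each combination step the
  singleton rectangle of a tuple is the intersection of exactly one pair of focal sets, and its
  mass is multiplied by the mass of the next singleton factor. If no factor has mass on the empty set, all focal rectangles are nonempty, there is no
  conflict, and Dempster's rule coincides with the conjunctive rule at every step.\<close>

lemma combine_list_snoc:
  "ms \<noteq> [] \<Longrightarrow> combine_list r (ms @ [m]) = r (combine_list r ms) m"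
  by (induction r ms rule: combine_list.induct) auto

lemma bel_singleton: "bel m {x} = m {x}"
proof -
  have "{B. B \<subseteq> {x} \<and> B \<noteq> {}} = {{x}}" by auto
  then show ?thesis by (simp add: bel_def)
qed

lemma conj_rule_neq_0E:
  assumes "conj_rule \<Theta> m1 m2 A \<noteq> 0"
  obtains B C where "B \<inter> C = A" "m1 B \<noteq> 0" "m2 C \<noteq> 0"
proof -
  obtain p where "p \<in> {(B, C). B \<subseteq> \<Theta> \<and> C \<subseteq> \<Theta> \<and> B \<inter> C = A}"
      and "(case p of (B, C) \<Rightarrow> m1 B * m2 C) \<noteq> 0"
    using assms unfolding conj_rule_def by (rule sum.not_neutral_contains_not_neutral)
  then show ?thesis using that by auto
qed

lemma conj_rule_eq_single:
  assumes "finite \<Theta>" "B0 \<subseteq> \<Theta>" "C0 \<subseteq> \<Theta>" "B0 \<inter> C0 = A"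
    and unique: "\<And>B C. B \<inter> C = A \<Longrightarrow> m1 B \<noteq> 0 \<Longrightarrow> m2 C \<noteq> 0 \<Longrightarrow> B = B0 \<and> C = C0"
  shows "conj_rule \<Theta> m1 m2 A = m1 B0 * m2 C0"
proof -
  let ?P = "{(B, C). B \<subseteq> \<Theta> \<and> C \<subseteq> \<Theta> \<and> B \<inter> C = A}"
  have "finite ?P"
    by (rule finite_subset[of _ "Pow \<Theta> \<times> Pow \<Theta>"]) (use assms(1) in auto)
  moreover have "{(B0, C0)} \<subseteq> ?P" using assms(2-4) by blast
  moreover have "\<forall>p \<in> ?P - {(B0, C0)}. (case p of (B, C) \<Rightarrow> m1 B * m2 C) = 0"
    using unique by fastforce
  ultimately show ?thesis unfolding conj_rule_def by (subst sum.mono_neutral_right) auto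
qed

lemma dempster_rule_eq_conj_rule:
  "conj_rule \<Theta> m1 m2 {} = 0 \<Longrightarrow> dempster_rule \<Theta> m1 m2 = conj_rule \<Theta> m1 m2"
  by (simp add: fun_eq_iff dempster_rule_def)

lemma finite_prod_frame: "finite (prod_frame n)"
  unfolding prod_frame_def using finite_lists_length_eq[of "UNIV :: bool set" n] by simp

lemma cyl_subset_prod_frame: "cyl n k D \<subseteq> prod_frame n"
  by (auto simp: cyl_def prod_frame_def)

lemma inj_cyl:
  assumes "k < n"
  shows "inj (cyl n k)"
proof (rule injI)
  fix B D assume eq: "cyl n k B = cyl n k D"
  have "b \<in> B \<longleftrightarrow> replicate n b \<in> cyl n k B" for b B using assms by (simp add: cyl_def)
  then show "B = D" using eq by blast
qed

lemma vac_ext_cyl: "k < n \<Longrightarrow> vac_ext n k m (cyl n k D) = m D"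
  using inj_cyl[of k n] by (simp add: vac_ext_def inj_eq)

lemma vac_ext_neq_0E:
  assumes "vac_ext n k m C \<noteq> 0"
  obtains D where "C = cyl n k D" "m D \<noteq> 0"
  using assms unfolding vac_ext_def
  by (rule sum.not_neutral_contains_not_neutral) (use that in auto)

definition rect :: "nat \<Rightarrow> nat \<Rightarrow> (nat \<Rightarrow> bool set) \<Rightarrow> bool list set" where
  "rect n k Bs = {ys. length ys = n \<and> (\<forall>i<k. ys ! i \<in> Bs i)}"

lemma rect_Suc_0: "rect n (Suc 0) Bs = cyl n 0 (Bs 0)"
  by (auto simp: rect_def cyl_def)

lemma rect_inter_cyl: "rect n k Bs \<inter> cyl n k D = rect n (Suc k) (Bs(k := D))"
  by (auto simp: rect_def cyl_def less_Suc_eq)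

lemma rect_cong: "(\<And>i. i < k \<Longrightarrow> Bs i = Cs i) \<Longrightarrow> rect n k Bs = rect n k Cs"
  by (auto simp: rect_def)

lemma rect_subset_prod_frame: "rect n k Bs \<subseteq> prod_frame n"
  by (auto simp: rect_def prod_frame_def)

lemma rect_singletons: "length xs = n \<Longrightarrow> rect n n (\<lambda>i. {xs ! i}) = {xs}"
  by (auto simp: rect_def intro: nth_equalityI)

lemma rect_nonempty:
  assumes "k \<le> n" "\<forall>i<k. Bs i \<noteq> {}"
  shows "rect n k Bs \<noteq> {}"
proof -
  let ?ys = "map (\<lambda>i. if i < k then (SOME b. b \<in> Bs i) else True) [0..<n]"
  have "?ys \<in> rect n k Bs"
    using assms by (auto simp: rect_def some_in_eq)
  then show ?thesis by blast
qed

lemma list_update_in_rect_iff: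
  assumes "xs \<in> rect n k Bs" "k \<le> n" "i < k"
  shows "xs[i := b] \<in> rect n k Bs \<longleftrightarrow> b \<in> Bs i"
  using assms by (auto simp: rect_def nth_list_update)

lemma rect_eq_singletonsD:
  assumes "length xs = n" "k \<le> n" "rect n k Bs = rect n k (\<lambda>i. {xs ! i})" "i < k"
  shows "Bs i = {xs ! i}"
proof -
  have xs: "xs \<in> rect n k (\<lambda>i. {xs ! i})" using assms(1) by (simp add: rect_def)
  have "b \<in> Bs i \<longleftrightarrow> b \<in> {xs ! i}" for b
    using list_update_in_rect_iff[OF xs[folded assms(3)] assms(2,4)]
      list_update_in_rect_iff[OF xs assms(2,4)] assms(3) by simp
  then show ?thesis by blast
qed

text \<open>For k = 0 this is the junk value \<open>\<lambda>A. 0\<close> of \<open>combine_list\<close>, so inductions start at k = 1.\<close>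
definition bel_lik_upto ::
    "((bool list set \<Rightarrow> real) \<Rightarrow> (bool list set \<Rightarrow> real) \<Rightarrow> (bool list set \<Rightarrow> real))
      \<Rightarrow> nat \<Rightarrow> (nat \<Rightarrow> bool set \<Rightarrow> real) \<Rightarrow> nat \<Rightarrow> bool list set \<Rightarrow> real" where
  "bel_lik_upto r n ms k = combine_list r (map (\<lambda>i. vac_ext n i (ms i)) [0..<k])"

lemma bel_lik_upto_Suc_0: "bel_lik_upto r n ms (Suc 0) = vac_ext n 0 (ms 0)"
  by (simp add: bel_lik_upto_def)

lemma bel_lik_upto_Suc:
  "k \<ge> 1 \<Longrightarrow> bel_lik_upto r n ms (Suc k) = r (bel_lik_upto r n ms k) (vac_ext n k (ms k))"
  by (simp add: bel_lik_upto_def combine_list_snoc)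

lemma bel_lik_eq_upto: "bel_lik r n ms = bel_lik_upto r n ms n"
  by (simp add: bel_lik_def bel_lik_upto_def)

lemma bel_lik_upto_conj_focal:
  assumes "1 \<le> k" "k \<le> n" "bel_lik_upto (conj_rule (prod_frame n)) n ms k B \<noteq> 0"
  shows "\<exists>Bs. B = rect n k Bs \<and> (\<forall>i<k. ms i (Bs i) \<noteq> 0)"
  using assms
proof (induction k arbitrary: B rule: nat_induct_at_least)
  case base
  then have "vac_ext n 0 (ms 0) B \<noteq> 0" by (simp add: bel_lik_upto_Suc_0)
  then obtain D where "B = cyl n 0 D" "ms 0 D \<noteq> 0" by (elim vac_ext_neq_0E)
  then show ?case by (intro exI[of _ "\<lambda>_. D"]) (simp add: rect_Suc_0)
next
  case (Suc k)
  then obtain B' C where "B' \<inter> C = B"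
      and B': "bel_lik_upto (conj_rule (prod_frame n)) n ms k B' \<noteq> 0"
      and C: "vac_ext n k (ms k) C \<noteq> 0"
    by (auto simp: bel_lik_upto_Suc elim: conj_rule_neq_0E)
  moreover obtain Bs where "B' = rect n k Bs" and Bs: "\<forall>i<k. ms i (Bs i) \<noteq> 0"
    using Suc B' by auto
  moreover obtain D where "C = cyl n k D" and D: "ms k D \<noteq> 0"
    using C by (elim vac_ext_neq_0E)
  ultimately have "B = rect n (Suc k) (Bs(k := D))"
    by (simp add: rect_inter_cyl)
  moreover have "\<forall>i<Suc k. ms i ((Bs(k := D)) i) \<noteq> 0"
    using Bs D by (simp add: less_Suc_eq)
  ultimately show ?case by blast
qed

lemma bel_lik_upto_conj_singleton:
  assumes "1 \<le> k" "k \<le> n" "length xs = n"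
  shows "bel_lik_upto (conj_rule (prod_frame n)) n ms k (rect n k (\<lambda>i. {xs ! i}))
           = (\<Prod>i<k. ms i {xs ! i})"
  using assms
proof (induction k rule: nat_induct_at_least)
  case base
  then show ?case by (simp add: bel_lik_upto_Suc_0 rect_Suc_0 vac_ext_cyl)
next
  case (Suc k)
  let ?M = "bel_lik_upto (conj_rule (prod_frame n)) n ms k"
  let ?S = "\<lambda>k. rect n k (\<lambda>i. {xs ! i})"
  have "k < n" using Suc by simp
  have singleton_inter: "?S k \<inter> cyl n k {xs ! k} = ?S (Suc k)"
    unfolding rect_inter_cyl by (rule rect_cong) (simp add: less_Suc_eq)
  have unique: "B = ?S k \<and> C = cyl n k {xs ! k}"
    if BC: "B \<inter> C = ?S (Suc k)" and B0: "?M B \<noteq> 0" and C0: "vac_ext n k (ms k) C \<noteq> 0"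
    for B C
  proof -
    obtain Bs where B: "B = rect n k Bs"
      using bel_lik_upto_conj_focal[OF Suc.hyps _ B0] Suc.prems by auto
    obtain D where C: "C = cyl n k D" using C0 by (elim vac_ext_neq_0E)
    have "rect n (Suc k) (Bs(k := D)) = ?S (Suc k)"
      using BC B C by (simp add: rect_inter_cyl)
    then have sides: "(Bs(k := D)) i = {xs ! i}" if "i < Suc k" for i
      using rect_eq_singletonsD[OF Suc.prems(2,1)] that by blast
    have "Bs i = {xs ! i}" if "i < k" for i
      using sides[of i] that by simp
    then have "B = ?S k" unfolding B by (rule rect_cong)
    moreover have "D = {xs ! k}" using sides[of k] by simp
    ultimately show ?thesis using C by simp
  qed
  have "bel_lik_upto (conj_rule (prod_frame n)) n ms (Suc k) (?S (Suc k))
        = conj_rule (prod_frame n) ?M (vac_ext n k (ms k)) (?S (Suc k))"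
    using Suc by (simp add: bel_lik_upto_Suc)
  also have "\<dots> = ?M (?S k) * vac_ext n k (ms k) (cyl n k {xs ! k})"
    by (rule conj_rule_eq_single[OF finite_prod_frame rect_subset_prod_frame cyl_subset_prod_frame
          singleton_inter unique])
  also have "\<dots> = (\<Prod>i<Suc k. ms i {xs ! i})"
    using Suc \<open>k < n\<close> by (simp add: vac_ext_cyl)
  finally show ?case .
qed

lemma bel_lik_upto_dempster_eq_conj:
  assumes "1 \<le> k" "k \<le> n" "\<forall>i<n. ms i {} = 0"
  shows "bel_lik_upto (dempster_rule (prod_frame n)) n ms k
           = bel_lik_upto (conj_rule (prod_frame n)) n ms k"
  using assms
proof (induction k rule: nat_induct_at_least)
  case base
  then show ?case by (simp add: bel_lik_upto_Suc_0)
next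
  case (Suc k)
  let ?M = "bel_lik_upto (conj_rule (prod_frame n)) n ms k"
  have "conj_rule (prod_frame n) ?M (vac_ext n k (ms k)) {} = 0"
  proof (rule ccontr, erule conj_rule_neq_0E)
    fix B C assume disjoint: "B \<inter> C = {}"
      and B: "?M B \<noteq> 0" and C: "vac_ext n k (ms k) C \<noteq> 0"
    obtain Bs where "B = rect n k Bs" and Bs: "\<forall>i<k. ms i (Bs i) \<noteq> 0"
      using bel_lik_upto_conj_focal[OF Suc.hyps _ B] Suc.prems by auto
    moreover obtain D where "C = cyl n k D" and D: "ms k D \<noteq> 0"
      using C by (elim vac_ext_neq_0E)
    ultimately have "B \<inter> C = rect n (Suc k) (Bs(k := D))"
      by (simp add: rect_inter_cyl)
    moreover have "rect n (Suc k) (Bs(k := D)) \<noteq> {}"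
      using Bs D Suc.prems Suc.hyps by (intro rect_nonempty) (auto simp: less_Suc_eq)
    ultimately show False using disjoint by simp
  qed
  then show ?case
    using Suc by (simp add: bel_lik_upto_Suc dempster_rule_eq_conj_rule)
qed

theorem theorem1:
  fixes n :: nat and ms :: "nat \<Rightarrow> bool set \<Rightarrow> real"
  assumes "n \<ge> 1"
    and "\<forall>i<n. mass_fun (UNIV :: bool set) (ms i)"
  shows "(\<forall>xs. length xs = n \<longrightarrow>
            bel (bel_lik (conj_rule (prod_frame n)) n ms) {xs} = (\<Prod>i<n. bel (ms i) {xs ! i}))
       \<and> ((\<forall>i<n. ms i {} = 0) \<longrightarrow>
          (\<forall>xs. length xs = n \<longrightarrow>
            bel (bel_lik (dempster_rule (prod_frame n)) n ms) {xs} = (\<Prod>i<n. bel (ms i) {xs ! i})))"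
proof -
  have conj: "bel (bel_lik (conj_rule (prod_frame n)) n ms) {xs} = (\<Prod>i<n. bel (ms i) {xs ! i})"
    if "length xs = n" for xs
    using bel_lik_upto_conj_singleton[of n n, OF assms(1) order_refl that] rect_singletons[OF that]
    by (simp add: bel_singleton bel_lik_eq_upto)
  moreover have "bel_lik (dempster_rule (prod_frame n)) n ms = bel_lik (conj_rule (prod_frame n)) n ms"
    if "\<forall>i<n. ms i {} = 0"
    using bel_lik_upto_dempster_eq_conj[of n n ms, OF assms(1) order_refl that] by (simp add: bel_lik_eq_upto)
  ultimately show ?thesis by simp
qed

end
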